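(* Let $X$ be either the unit interval $[0,1]$ or the circle $S^1$ (with its usual metric), let $\mu$ be a finite nonatomic Radon measure on $X$ giving positive measure to every nonempty open set, and let $T:X\to X$ be an invertible continuous measure-preserving map (a homeomorphism preserving $\mu$). Then for any sequence of natural numbers $n_k\to\infty$, $T$ is rigid along $\{n_k\}$ if and only if $T$ is uniformly rigid along $\{n_k\}$.
   Context: $T$ is rigid along $\{n_k\}$ if $\mu(A\triangle T^{n_k}A)\to 0$ for every measurable $A\subset X$. $T$ is uniformly rigid along $\{n_k\}$ if $\sup_{x\in X} d(T^{n_k}x,x)\to 0$. *)

theory Defs
  imports "HOL-Analysis.Analysis"
begin

definition mpt :: "'a measure \<Rightarrow> ('a \<Rightarrow> 'a) \<Rightarrow> bool" where
  "mpt M T \<longleftrightarrow> T \<in> M \<rightarrow>\<^sub>M M \<and>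
     (\<forall>A\<in>sets M. emeasure M (T -` A \<inter> space M) = emeasure M A)"

definition rigid_along :: "'a measure \<Rightarrow> ('a \<Rightarrow> 'a) \<Rightarrow> (nat \<Rightarrow> nat) \<Rightarrow> bool" where
  "rigid_along M T n \<longleftrightarrow>
     (\<forall>A\<in>sets M. (\<lambda>k. emeasure M ((A - (T ^^ n k) ` A) \<union> ((T ^^ n k) ` A - A)))
        \<longlonglongrightarrow> 0)"

definition uniformly_rigid_along :: "'a::metric_space set \<Rightarrow> ('a \<Rightarrow> 'a) \<Rightarrow> (nat \<Rightarrow> nat) \<Rightarrow> bool" where
  "uniformly_rigid_along X T n \<longleftrightarrow>
     (\<lambda>k. SUP x\<in>X. dist ((T ^^ n k) x) x) \<longlonglongrightarrow> 0"

end

theory Submission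
  imports Defs
begin

text \<open>
  By regularity a measurable set \<open>A\<close> lies between a compact \<open>K\<close> and an open \<open>U\<close> close to it
  in measure, and for small \<open>d\<close> the \<open>d\<close>-neighbourhood of \<open>K\<close> lies in \<open>U\<close>. A
  measure-preserving homeomorphism \<open>F\<close> moving every point by less than \<open>d\<close> maps \<open>K\<close> into
  \<open>U\<close> and covers \<open>K\<close> by the image of \<open>U\<close>, so the symmetric difference of \<open>A\<close> and
  \<open>F A\<close> has measure at most \<open>2 (\<mu>(A - K) + \<mu>(U - A))\<close>. Hence uniform rigidity implies
  rigidity.

  Conversely, if \<open>T^(n k)\<close> does not converge uniformly to the identity, compactness gives
  points \<open>z\<^sub>j \<longrightarrow> x\<close> whose images along a subsequence tend to some \<open>y \<noteq> x\<close>. On an arc or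
  a circle, every connected set coming close to both \<open>x\<close> and \<open>y\<close> contains one of two fixed
  nonempty open sets \<open>P\<close>, \<open>Q\<close>. Since \<open>\<mu>\<close> has no atoms, \<open>x\<close> has a connected open
  neighbourhood \<open>V\<close> with \<open>\<mu>(V) < \<mu>(P), \<mu>(Q)\<close>; by rigidity \<open>V\<close> eventually meets its
  image, and that connected image also reaches near \<open>y\<close>, so it contains \<open>P\<close> or \<open>Q\<close>,
  contradicting \<open>\<mu>(T^(n k) V) = \<mu>(V)\<close>.
\<close>

section \<open>Iterates of a measure-preserving homeomorphism\<close>

lemma mpt_funpow:
  assumes "mpt M T"
  shows "mpt M (T ^^ m)"
proof (induction m)
  case 0
  show ?case by (auto simp: mpt_def Int_absorb2 sets.sets_into_space)
next
  case (Suc m)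
  have T: "T \<in> M \<rightarrow>\<^sub>M M" and Tm: "T ^^ m \<in> M \<rightarrow>\<^sub>M M"
    using assms Suc unfolding mpt_def by auto
  show ?case
    unfolding mpt_def
  proof (intro conjI ballI)
    show "T ^^ Suc m \<in> M \<rightarrow>\<^sub>M M" using measurable_comp[OF Tm T] by (simp add: o_def)
    fix A assume A: "A \<in> sets M"
    have "(T ^^ Suc m) -` A \<inter> space M = (T ^^ m) -` (T -` A \<inter> space M) \<inter> space M"
      using measurable_space[OF Tm] by auto
    also have "emeasure M \<dots> = emeasure M (T -` A \<inter> space M)"
      using Suc measurable_sets[OF T A] unfolding mpt_def by blast
    also have "\<dots> = emeasure M A" using assms A unfolding mpt_def by blast
    finally show "emeasure M ((T ^^ Suc m) -` A \<inter> space M) = emeasure M A" .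
  qed
qed

lemma homeomorphism_funpow:
  assumes "homeomorphism X X T S"
  shows "homeomorphism X X (T ^^ m) (S ^^ m)"
proof (induction m)
  case 0
  show ?case by (simp add: homeomorphism_ident)
next
  case (Suc m)
  have "homeomorphism X X (T \<circ> T ^^ m) (S ^^ m \<circ> S)"
    by (rule homeomorphism_compose[OF Suc assms])
  thus ?case by (metis funpow.simps(2) funpow_Suc_right)
qed

lemma mpt_image:
  assumes "mpt M F" "R \<in> M \<rightarrow>\<^sub>M M"
    and RF: "\<And>x. x \<in> space M \<Longrightarrow> R (F x) = x" and FR: "\<And>y. y \<in> space M \<Longrightarrow> F (R y) = y"
    and B: "B \<in> sets M"
  shows "F ` B \<in> sets M" "emeasure M (F ` B) = emeasure M B"
proof -
  have BM: "B \<subseteq> space M" using B sets.sets_into_space by auto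
  have F: "F \<in> M \<rightarrow>\<^sub>M M" using assms(1) unfolding mpt_def by auto
  have "F ` B = R -` B \<inter> space M"
    using BM RF FR measurable_space[OF F] by (auto intro: rev_image_eqI)
  thus FB: "F ` B \<in> sets M" using measurable_sets[OF assms(2) B] by simp
  have "F -` (F ` B) \<inter> space M = B"
    using BM RF by auto (metis subsetD)
  thus "emeasure M (F ` B) = emeasure M B"
    using assms(1) FB unfolding mpt_def by metis
qed

lemma measurable_restrict_space_borel_continuous:
  assumes "sets M = sets (restrict_space borel X)" "continuous_on X f" "f ` X \<subseteq> X"
  shows "f \<in> M \<rightarrow>\<^sub>M M"
proof -
  have "f \<in> restrict_space borel X \<rightarrow>\<^sub>M restrict_space borel X"
    by (rule measurable_restrict_space2[OF _ borel_measurable_continuous_on_restrict[OF assms(2)]])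
      (use assms(3) in \<open>auto simp: space_restrict_space\<close>)
  thus ?thesis using measurable_cong_sets[OF assms(1) assms(1)] by blast
qed

lemma homeomorphism_mpt_funpow_image:
  assumes sets_M: "sets M = sets (restrict_space borel X)"
    and hom: "homeomorphism X X T S" and mp: "mpt M T" and B: "B \<in> sets M"
  shows "(T ^^ m) ` B \<in> sets M" "emeasure M ((T ^^ m) ` B) = emeasure M B"
proof -
  have space: "space M = X"
    using sets_eq_imp_space_eq[OF sets_M] by (simp add: space_restrict_space)
  have hom_m: "homeomorphism X X (T ^^ m) (S ^^ m)"
    by (rule homeomorphism_funpow[OF hom])
  have "S ^^ m \<in> M \<rightarrow>\<^sub>M M"
    using hom_m by (intro measurable_restrict_space_borel_continuous[OF sets_M])
      (auto simp: homeomorphism_def)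
  from mpt_image[OF mpt_funpow[OF mp] this _ _ B] hom_m
  show "(T ^^ m) ` B \<in> sets M" "emeasure M ((T ^^ m) ` B) = emeasure M B"
    unfolding space homeomorphism_def by auto
qed

section \<open>Approximation in measure\<close>

lemma emeasure_small_ball:
  fixes M :: "'a::metric_space measure"
  assumes fin: "emeasure M (space M) \<noteq> \<infinity>" and x: "x \<in> space M" and atom: "emeasure M {x} = 0"
    and balls: "\<And>r. space M \<inter> ball x r \<in> sets M" and "c > 0"
  obtains r where "r > 0" "emeasure M (space M \<inter> ball x r) < c"
proof -
  define B where "B m = space M \<inter> ball x (1 / Suc m)" for m
  have "decseq B"
    unfolding B_def by (intro decseq_SucI Int_mono subset_ball) (auto simp: frac_le)
  moreover have "emeasure M (B m) \<noteq> \<infinity>" for m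
    using fin emeasure_space[of M "B m"] by (auto simp: top_unique)
  moreover have "(\<Inter>m. B m) = {x}"
  proof (intro equalityI subsetI)
    fix z assume "z \<in> (\<Inter>m. B m)"
    hence "dist x z < 1 / Suc m" for m unfolding B_def by auto
    hence "dist x z \<le> 0"
      by (intro LIMSEQ_le_const[OF LIMSEQ_inverse_real_of_nat])
        (auto simp: inverse_eq_divide less_imp_le)
    thus "z \<in> {x}" by simp
  qed (use x in \<open>auto simp: B_def\<close>)
  ultimately have "(\<lambda>m. emeasure M (B m)) \<longlonglongrightarrow> 0"
    using Lim_emeasure_decseq[of B M] balls atom unfolding B_def by auto
  from order_tendstoD(2)[OF this \<open>c > 0\<close>] obtain m where "emeasure M (B m) < c"
    by (auto simp: eventually_sequentially)
  thus ?thesis using that[of "1 / Suc m"] unfolding B_def by simp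
qed

lemma small_connected_neighbourhood:
  fixes M :: "'a::metric_space measure"
  assumes lc: "locally connected X" and sets_M: "sets M = sets (restrict_space borel X)"
    and fin: "emeasure M X \<noteq> \<infinity>" and x: "x \<in> X" and atom: "emeasure M {x} = 0"
    and "c > 0" "d > 0"
  obtains V where "openin (top_of_set X) V" "connected V" "x \<in> V" "V \<subseteq> ball x d"
    "emeasure M V < c"
proof -
  have space: "space M = X"
    using sets_eq_imp_space_eq[OF sets_M] by (simp add: space_restrict_space)
  have balls: "X \<inter> ball x r \<in> sets M" for r
    unfolding sets_M sets_restrict_space by auto
  obtain r where "r > 0" and r: "emeasure M (X \<inter> ball x r) < c"
    using emeasure_small_ball[of M x] fin x atom balls \<open>c > 0\<close> unfolding space by blast
  have "openin (top_of_set X) (X \<inter> ball x (min r d))" by (simp add: openin_open_Int)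
  then obtain V where V: "openin (top_of_set X) V" "connected V" "x \<in> V"
      "V \<subseteq> X \<inter> ball x (min r d)"
    using lc x \<open>r > 0\<close> \<open>d > 0\<close> unfolding locally_connected by force
  have "emeasure M V \<le> emeasure M (X \<inter> ball x r)"
    using V(4) balls by (intro emeasure_mono) auto
  thus ?thesis using that[OF V(1-3)] V(4) r unfolding ball_min_Int by auto
qed

lemma restrict_borel_regular_approx:
  fixes M :: "'a::polish_space measure"
  assumes sets_M: "sets M = sets (restrict_space borel X)" and X: "X \<in> sets borel"
    and fin: "emeasure M X \<noteq> \<infinity>" and A: "A \<in> sets M" and e: "e > 0"
  obtains K U where "compact K" "K \<subseteq> A" "open U" "A \<subseteq> U"
    "measure M (A - K) < e" "measure M (X \<inter> U - A) < e"
proof -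
  have space: "space M = X"
    using sets_eq_imp_space_eq[OF sets_M] by (simp add: space_restrict_space)
  interpret finite_measure M by (rule finite_measureI) (use fin space in auto)
  have AX: "A \<subseteq> X" using sets.sets_into_space[OF A] space by simp
  have A_borel: "A \<in> sets borel" using A X unfolding sets_M sets_restrict_space by auto
  define N where "N = distr M borel (\<lambda>z. z)"
  have "(\<lambda>z. z) \<in> M \<rightarrow>\<^sub>M borel"
    using measurable_restrict_space1[OF measurable_id[of borel], of X]
      measurable_cong_sets[OF sets_M refl] by blast
  hence N: "emeasure N B = measure M (X \<inter> B)" if "B \<in> sets borel" for B
    using that space unfolding N_def by (simp add: emeasure_distr Int_commute emeasure_eq_measure)
  have sets_N: "sets N = sets borel" and fin_N: "emeasure N (space N) \<noteq> \<infinity>"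
    using N[of UNIV] unfolding N_def by auto
  have NA: "emeasure N A = measure M A" using N[OF A_borel] AX by (simp add: Int_absorb1)
  obtain K where K: "compact K" "K \<subseteq> A" "measure M A < measure M K + e"
  proof (cases "measure M A < e")
    case True
    thus ?thesis using that[of "{}"] by simp
  next
    case False
    have "ennreal (measure M A - e) < emeasure N A"
      unfolding NA using False e by (simp add: ennreal_less_iff)
    also have "emeasure N A = (SUP K \<in> {K. K \<subseteq> A \<and> compact K}. emeasure N K)"
      by (rule inner_regular[OF sets_N fin_N A_borel])
    finally obtain K where K: "K \<subseteq> A" "compact K" "ennreal (measure M A - e) < emeasure N K"
      unfolding less_SUP_iff by auto
    have "emeasure N K = measure M K"
      using N[OF borel_compact[OF K(2)]] K(1) AX by (simp add: Int_absorb1 subset_trans)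
    thus ?thesis using that[of K] K False by (simp add: ennreal_less_iff)
  qed
  obtain U where U: "open U" "A \<subseteq> U" "measure M (X \<inter> U) < measure M A + e"
  proof -
    have "emeasure N A < ennreal (measure M A + e)"
      unfolding NA using e by (simp add: ennreal_less_iff)
    also have "emeasure N A = (INF U \<in> {U. A \<subseteq> U \<and> open U}. emeasure N U)"
      by (rule outer_regular[OF sets_N fin_N A_borel])
    finally obtain U where "A \<subseteq> U" "open U" "emeasure N U < ennreal (measure M A + e)"
      unfolding INF_less_iff by auto
    thus ?thesis using that[of U] N[of U] by (simp add: ennreal_less_iff)
  qed
  have K_sets: "K \<in> sets M"
    using K AX unfolding sets_M sets_restrict_space
    by (auto intro!: image_eqI[of K _ K] borel_compact)
  have U_sets: "X \<inter> U \<in> sets M"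
    using U(1) unfolding sets_M sets_restrict_space by auto
  show ?thesis
  proof (rule that[OF K(1,2) U(1,2)])
    show "measure M (A - K) < e" using finite_measure_Diff[OF A K_sets K(2)] K(3) by simp
    show "measure M (X \<inter> U - A) < e"
      using finite_measure_Diff[OF U_sets A] U AX by auto
  qed
qed

lemma symdiff_image_subset:
  assumes "K \<subseteq> A" "F ` K \<subseteq> G" "K \<subseteq> F ` G"
  shows "(A - F ` A) \<union> (F ` A - A) \<subseteq> F ` (A - K) \<union> (G - A) \<union> (A - K) \<union> F ` (G - A)"
  using assms by blast

lemma (in finite_measure) measure_symdiff_image_le:
  assumes F_sets: "\<And>B. B \<in> sets M \<Longrightarrow> F ` B \<in> sets M"
    and F_measure: "\<And>B. B \<in> sets M \<Longrightarrow> measure M (F ` B) = measure M B"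
    and sets: "K \<in> sets M" "A \<in> sets M" "G \<in> sets M"
    and "K \<subseteq> A" "F ` K \<subseteq> G" "K \<subseteq> F ` G"
  shows "measure M ((A - F ` A) \<union> (F ` A - A)) \<le> 2 * (measure M (A - K) + measure M (G - A))"
proof -
  have AK: "A - K \<in> sets M" and GA: "G - A \<in> sets M" using sets by auto
  have "measure M ((A - F ` A) \<union> (F ` A - A))
      \<le> measure M (F ` (A - K) \<union> (G - A) \<union> (A - K) \<union> F ` (G - A))"
    using symdiff_image_subset[OF assms(6-8)] F_sets[OF AK] F_sets[OF GA] AK GA
    by (intro finite_measure_mono) auto
  also have "\<dots> \<le> measure M (F ` (A - K)) + measure M (G - A)
      + measure M (A - K) + measure M (F ` (G - A))"
    using F_sets[OF AK] F_sets[OF GA] AK GA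
    by (intro order.trans[OF measure_Un_le] add_mono order_refl) auto
  also have "\<dots> = 2 * (measure M (A - K) + measure M (G - A))"
    using F_measure[OF AK] F_measure[OF GA] by simp
  finally show ?thesis .
qed

section \<open>Rigidity and uniform rigidity\<close>

lemma uniformly_rigid_along_iff:
  fixes X :: "'a::metric_space set"
  assumes "bounded X" "X \<noteq> {}" "T ` X \<subseteq> X"
  shows "uniformly_rigid_along X T n \<longleftrightarrow>
    (\<forall>e>0. eventually (\<lambda>k. \<forall>x\<in>X. dist ((T ^^ n k) x) x < e) sequentially)"
proof -
  define D where "D k = (SUP x\<in>X. dist ((T ^^ n k) x) x)" for k
  have maps: "(T ^^ m) x \<in> X" if "x \<in> X" for m x
    using that assms(3) by (induction m) auto
  have bdd: "bdd_above ((\<lambda>x. dist ((T ^^ m) x) x) ` X)" for m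
    using diameter_bounded_bound[OF assms(1) maps] by (intro bdd_aboveI2) auto
  have le_D: "dist ((T ^^ n k) x) x \<le> D k" if "x \<in> X" for k x
    unfolding D_def using cSUP_upper[OF that bdd] .
  have D_nonneg: "0 \<le> D k" for k
    using assms(2) le_D[of _ k] zero_le_dist by (meson all_not_in_conv order.trans)
  show ?thesis
    unfolding uniformly_rigid_along_def D_def[symmetric]
  proof (intro iffI allI impI)
    fix e :: real assume "D \<longlonglongrightarrow> 0" "e > 0"
    from order_tendstoD(2)[OF this]
    show "eventually (\<lambda>k. \<forall>x\<in>X. dist ((T ^^ n k) x) x < e) sequentially"
      by (rule eventually_mono) (meson le_D order.strict_trans1)
  next
    assume close: "\<forall>e>0. eventually (\<lambda>k. \<forall>x\<in>X. dist ((T ^^ n k) x) x < e) sequentially"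
    show "D \<longlonglongrightarrow> 0"
    proof (rule tendstoI)
      fix e :: real assume "e > 0"
      have "eventually (\<lambda>k. \<forall>x\<in>X. dist ((T ^^ n k) x) x < e / 2) sequentially"
        using close[rule_format, OF half_gt_zero[OF \<open>e > 0\<close>]] .
      thus "eventually (\<lambda>k. dist (D k) 0 < e) sequentially"
      proof eventually_elim
        case (elim k)
        have "D k \<le> e / 2"
          unfolding D_def using elim by (intro cSUP_least[OF assms(2)]) (auto simp: less_imp_le)
        thus ?case using D_nonneg[of k] \<open>e > 0\<close> by simp
      qed
    qed
  qed
qed

lemma compact_not_eventually_close_limit_pair:
  fixes X :: "'a::metric_space set" and f :: "nat \<Rightarrow> 'a \<Rightarrow> 'a"
  assumes "compact X" and maps: "\<And>k x. x \<in> X \<Longrightarrow> f k x \<in> X"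
    and far: "\<not> eventually (\<lambda>k. \<forall>x\<in>X. dist (f k x) x < e) sequentially"
  obtains x y s z where "x \<in> X" "y \<in> X" "e \<le> dist y x" "strict_mono s" "\<And>j. z j \<in> X"
    "z \<longlonglongrightarrow> x" "(\<lambda>j. f (s j) (z j)) \<longlonglongrightarrow> y"
proof -
  obtain r :: "nat \<Rightarrow> nat" where r: "strict_mono r" "\<forall>j. \<exists>w\<in>X. e \<le> dist (f (r j) w) w"
    using not_eventually_sequentiallyD[OF far] unfolding not_less[symmetric] by blast
  obtain w where w: "\<And>j. w j \<in> X" "\<And>j. e \<le> dist (f (r j) (w j)) (w j)"
    using r(2) by metis
  have "seq_compact (X \<times> X)" by (intro compact_imp_seq_compact compact_Times assms(1))
  moreover have "\<forall>j. (w j, f (r j) (w j)) \<in> X \<times> X" using w(1) maps by auto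
  ultimately obtain l g where l: "l \<in> X \<times> X" "strict_mono g"
      "((\<lambda>j. (w j, f (r j) (w j))) \<circ> g) \<longlonglongrightarrow> l"
    by (rule seq_compactE)
  obtain x y where xy: "l = (x, y)" by (cases l)
  have x: "(w \<circ> g) \<longlonglongrightarrow> x" and y: "(\<lambda>j. f ((r \<circ> g) j) ((w \<circ> g) j)) \<longlonglongrightarrow> y"
    using tendsto_fst[OF l(3)] tendsto_snd[OF l(3)] unfolding xy by (simp_all add: o_def)
  have "x \<in> X" "y \<in> X" using l(1) xy by auto
  moreover have "e \<le> dist y x"
    by (rule tendsto_lowerbound[OF tendsto_dist[OF y x]]) (use w(2) in \<open>simp_all add: o_def\<close>)
  ultimately show ?thesis
    using that[OF _ _ _ strict_mono_o[OF r(1) l(2)] _ x y] w(1) by simp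
qed

lemma rigid_along_eventually_meets:
  assumes "rigid_along M T n" "V \<in> sets M" "emeasure M V > 0"
    and images: "\<And>k. (T ^^ n k) ` V \<in> sets M"
  shows "eventually (\<lambda>k. V \<inter> (T ^^ n k) ` V \<noteq> {}) sequentially"
proof -
  have "eventually (\<lambda>k. emeasure M ((V - (T ^^ n k) ` V) \<union> ((T ^^ n k) ` V - V)) < emeasure M V)
      sequentially"
    using assms(1,2) order_tendstoD(2)[OF _ assms(3)] unfolding rigid_along_def by blast
  thus ?thesis
  proof (rule eventually_mono)
    fix k
    assume less: "emeasure M ((V - (T ^^ n k) ` V) \<union> ((T ^^ n k) ` V - V)) < emeasure M V"
    show "V \<inter> (T ^^ n k) ` V \<noteq> {}"
    proof
      assume "V \<inter> (T ^^ n k) ` V = {}"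
      hence "V \<subseteq> (V - (T ^^ n k) ` V) \<union> ((T ^^ n k) ` V - V)" by auto
      moreover have "(V - (T ^^ n k) ` V) \<union> ((T ^^ n k) ` V - V) \<in> sets M"
        using assms(2) images by auto
      ultimately show False using emeasure_mono less by (metis not_le)
    qed
  qed
qed

lemma measure_symdiff_image_near_id_le:
  fixes M :: "'a::metric_space measure"
  assumes "finite_measure M"
    and F_sets: "\<And>B. B \<in> sets M \<Longrightarrow> F ` B \<in> sets M"
    and F_measure: "\<And>B. B \<in> sets M \<Longrightarrow> measure M (F ` B) = measure M B"
    and hom: "homeomorphism X X F R" and near: "\<forall>x\<in>X. dist (F x) x < d"
    and sets: "K \<in> sets M" "A \<in> sets M" "G \<in> sets M" and KA: "K \<subseteq> A" and AX: "A \<subseteq> X"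
    and nbhd: "\<And>z. z \<in> K \<Longrightarrow> X \<inter> ball z d \<subseteq> G"
  shows "measure M ((A - F ` A) \<union> (F ` A - A)) \<le> 2 * (measure M (A - K) + measure M (G - A))"
proof (rule finite_measure.measure_symdiff_image_le[OF assms(1) F_sets F_measure sets KA])
  show "F ` K \<subseteq> G"
  proof
    fix y assume "y \<in> F ` K"
    then obtain z where z: "z \<in> K" "y = F z" by blast
    hence "z \<in> X" using KA AX by auto
    hence "F z \<in> X \<inter> ball z d" using near hom by (auto simp: dist_commute homeomorphism_def)
    thus "y \<in> G" using z nbhd[OF z(1)] by blast
  qed
  show "K \<subseteq> F ` G"
  proof
    fix z assume z: "z \<in> K"
    hence "z \<in> X" using KA AX by auto
    with hom have w: "R z \<in> X" "F (R z) = z" by (auto simp: homeomorphism_def)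
    with near have "R z \<in> ball z d" by force
    with w nbhd[OF z] show "z \<in> F ` G" by (metis IntI image_eqI subsetD)
  qed
qed

lemma uniformly_rigid_imp_rigid:
  fixes X :: "'a::polish_space set"
  assumes X: "compact X" "X \<noteq> {}" and sets_M: "sets M = sets (restrict_space borel X)"
    and fin: "emeasure M X < \<infinity>" and hom: "homeomorphism X X T S" and mp: "mpt M T"
    and UR: "uniformly_rigid_along X T n"
  shows "rigid_along M T n"
  unfolding rigid_along_def
proof
  have space: "space M = X"
    using sets_eq_imp_space_eq[OF sets_M] by (simp add: space_restrict_space)
  have fin_X: "emeasure M X \<noteq> \<infinity>" using fin by simp
  interpret finite_measure M by (rule finite_measureI) (use fin_X space in simp)
  have close: "\<forall>d>0. eventually (\<lambda>k. \<forall>x\<in>X. dist ((T ^^ n k) x) x < d) sequentially"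
    using UR uniformly_rigid_along_iff[OF compact_imp_bounded[OF X(1)] X(2)] hom
    by (simp add: homeomorphism_def)
  note image = homeomorphism_mpt_funpow_image[OF sets_M hom mp]
  have image_measure: "measure M ((T ^^ m) ` B) = measure M B" if "B \<in> sets M" for m B
    using image(2)[OF that] by (simp add: measure_def)
  fix A assume A: "A \<in> sets M"
  have AX: "A \<subseteq> X" using sets.sets_into_space[OF A] space by simp
  have "(\<lambda>k. measure M ((A - (T ^^ n k) ` A) \<union> ((T ^^ n k) ` A - A))) \<longlonglongrightarrow> 0"
  proof (rule tendstoI)
    fix r :: real assume "r > 0"
    hence "r / 4 > 0" by simp
    then obtain K U where K: "compact K" "K \<subseteq> A" and U: "open U" "A \<subseteq> U"
      and small: "measure M (A - K) < r / 4" "measure M (X \<inter> U - A) < r / 4"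
      by (rule restrict_borel_regular_approx[OF sets_M borel_compact[OF X(1)] fin_X A])
    have "K \<in> sets M" "X \<inter> U \<in> sets M"
      using K AX U(1) unfolding sets_M sets_restrict_space
      by (auto intro!: image_eqI[of K] borel_compact)
    obtain d where "d > 0" and d: "\<And>z. z \<in> K \<Longrightarrow> ball z d \<subseteq> U"
      using Heine_Borel_lemma[OF K(1), of "{U}"] K(2) U by auto
    from close \<open>d > 0\<close> have "eventually (\<lambda>k. \<forall>x\<in>X. dist ((T ^^ n k) x) x < d) sequentially"
      by blast
    thus "eventually (\<lambda>k. dist (measure M ((A - (T ^^ n k) ` A) \<union> ((T ^^ n k) ` A - A))) 0 < r)
        sequentially"
    proof (rule eventually_mono)
      fix k assume "\<forall>x\<in>X. dist ((T ^^ n k) x) x < d"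
      from measure_symdiff_image_near_id_le[OF finite_measure_axioms image(1) image_measure
          homeomorphism_funpow[OF hom] this \<open>K \<in> sets M\<close> A \<open>X \<inter> U \<in> sets M\<close> K(2) AX] d
      have "measure M ((A - (T ^^ n k) ` A) \<union> ((T ^^ n k) ` A - A))
          \<le> 2 * (measure M (A - K) + measure M (X \<inter> U - A))"
        by blast
      thus "dist (measure M ((A - (T ^^ n k) ` A) \<union> ((T ^^ n k) ` A - A))) 0 < r"
        using small by simp
    qed
  qed
  from tendsto_ennrealI[OF this]
  show "(\<lambda>k. emeasure M ((A - (T ^^ n k) ` A) \<union> ((T ^^ n k) ` A - A))) \<longlonglongrightarrow> 0"
    by (simp add: emeasure_eq_measure)
qed

text \<open>
  \<open>connected_joins_fat X\<close> holds for arcs and circles, where a connected set close to two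
  points must contain an arc between them; it fails e.g. for a disc.
\<close>

definition connected_joins_fat_at :: "'a::metric_space set \<Rightarrow> 'a \<Rightarrow> 'a \<Rightarrow> bool" where
  "connected_joins_fat_at X x y \<longleftrightarrow> (\<exists>d>0. \<exists>P Q.
     openin (top_of_set X) P \<and> P \<noteq> {} \<and> openin (top_of_set X) Q \<and> Q \<noteq> {} \<and>
     (\<forall>C a b. connected C \<longrightarrow> C \<subseteq> X \<longrightarrow> a \<in> C \<longrightarrow> b \<in> C \<longrightarrow>
        dist a x < d \<longrightarrow> dist b y < d \<longrightarrow> P \<subseteq> C \<or> Q \<subseteq> C))"

definition connected_joins_fat :: "'a::metric_space set \<Rightarrow> bool" where
  "connected_joins_fat X \<longleftrightarrow> (\<forall>x\<in>X. \<forall>y\<in>X. x \<noteq> y \<longrightarrow> connected_joins_fat_at X x y)"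

lemma connected_joins_fat_at_commute:
  assumes "connected_joins_fat_at X x y"
  shows "connected_joins_fat_at X y x"
proof -
  obtain d P Q where PQ: "d > 0" "openin (top_of_set X) P" "P \<noteq> {}"
      "openin (top_of_set X) Q" "Q \<noteq> {}"
    and joins: "\<forall>C a b. connected C \<longrightarrow> C \<subseteq> X \<longrightarrow> a \<in> C \<longrightarrow> b \<in> C \<longrightarrow>
        dist a x < d \<longrightarrow> dist b y < d \<longrightarrow> P \<subseteq> C \<or> Q \<subseteq> C"
    using assms unfolding connected_joins_fat_at_def by blast
  have "\<forall>C a b. connected C \<longrightarrow> C \<subseteq> X \<longrightarrow> a \<in> C \<longrightarrow> b \<in> C \<longrightarrow>
      dist a y < d \<longrightarrow> dist b x < d \<longrightarrow> P \<subseteq> C \<or> Q \<subseteq> C"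
  proof (intro allI impI)
    fix C a b
    assume "connected C" "C \<subseteq> X" "a \<in> C" "b \<in> C" "dist a y < d" "dist b x < d"
    thus "P \<subseteq> C \<or> Q \<subseteq> C" using joins by simp
  qed
  with PQ show ?thesis
    unfolding connected_joins_fat_at_def
    by (intro exI[of _ d] exI[of _ P] exI[of _ Q] conjI) simp_all
qed

lemma recurrent_small_connected_stays_far:
  fixes X :: "'a::metric_space set"
  assumes sets_M: "sets M = sets (restrict_space borel X)"
    and hom: "homeomorphism X X T S" and mp: "mpt M T"
    and joins: "\<And>C a b. connected C \<Longrightarrow> C \<subseteq> X \<Longrightarrow> a \<in> C \<Longrightarrow> b \<in> C \<Longrightarrow>
        dist a x < d \<Longrightarrow> dist b y < d \<Longrightarrow> P \<subseteq> C \<or> Q \<subseteq> C"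
    and V: "openin (top_of_set X) V" "connected V" "V \<subseteq> ball x d"
    and small: "emeasure M V < emeasure M P" "emeasure M V < emeasure M Q"
    and recurrent: "V \<inter> (T ^^ m) ` V \<noteq> {}" and z: "z \<in> V"
  shows "d \<le> dist ((T ^^ m) z) y"
proof (rule ccontr)
  assume near: "\<not> ?thesis"
  define J where "J = (T ^^ m) ` V"
  have "V \<subseteq> X" using V(1) by (rule openin_imp_subset)
  have V_sets: "V \<in> sets M"
    using V(1) unfolding sets_M sets_restrict_space openin_open by auto
  obtain a where a: "a \<in> V" "a \<in> J" using recurrent J_def by blast
  have hom_m: "homeomorphism X X (T ^^ m) (S ^^ m)" by (rule homeomorphism_funpow[OF hom])
  hence "continuous_on V (T ^^ m)"
    using continuous_on_subset \<open>V \<subseteq> X\<close> unfolding homeomorphism_def by blast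
  hence "connected J" unfolding J_def by (rule connected_continuous_image[OF _ V(2)])
  moreover have "J \<subseteq> X" using hom_m \<open>V \<subseteq> X\<close> unfolding J_def homeomorphism_def by auto
  moreover have "(T ^^ m) z \<in> J" using z unfolding J_def by (rule imageI)
  moreover have "dist a x < d" using a(1) V(3) by (simp add: dist_commute subset_eq)
  moreover have "dist ((T ^^ m) z) y < d" using near by simp
  ultimately have "P \<subseteq> J \<or> Q \<subseteq> J" by (rule joins[OF _ _ a(2)])
  moreover have J_sets: "J \<in> sets M"
    unfolding J_def by (rule homeomorphism_mpt_funpow_image(1)[OF sets_M hom mp V_sets])
  ultimately have "emeasure M P \<le> emeasure M J \<or> emeasure M Q \<le> emeasure M J"
    using emeasure_mono by blast
  moreover have "emeasure M J = emeasure M V"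
    unfolding J_def by (rule homeomorphism_mpt_funpow_image(2)[OF sets_M hom mp V_sets])
  ultimately show False using small leD by metis
qed

lemma rigid_along_limit_pair_eq:
  fixes X :: "'a::metric_space set"
  assumes X: "locally connected X" "connected_joins_fat X"
    and sets_M: "sets M = sets (restrict_space borel X)" and fin: "emeasure M X < \<infinity>"
    and nonatomic: "\<forall>x\<in>X. emeasure M {x} = 0"
    and full_support: "\<forall>U. openin (top_of_set X) U \<and> U \<noteq> {} \<longrightarrow> emeasure M U > 0"
    and hom: "homeomorphism X X T S" and mp: "mpt M T" and R: "rigid_along M T n"
    and xy: "x \<in> X" "y \<in> X" and s: "strict_mono s"
    and z: "\<And>j. z j \<in> X" "z \<longlonglongrightarrow> x" "(\<lambda>j. (T ^^ n (s j)) (z j)) \<longlonglongrightarrow> y"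
  shows "y = x"
proof (rule ccontr)
  assume "y \<noteq> x"
  then obtain d P Q where "d > 0" and PQ: "openin (top_of_set X) P" "P \<noteq> {}"
      "openin (top_of_set X) Q" "Q \<noteq> {}"
    and joins: "\<And>C a b. connected C \<Longrightarrow> C \<subseteq> X \<Longrightarrow> a \<in> C \<Longrightarrow> b \<in> C \<Longrightarrow>
        dist a x < d \<Longrightarrow> dist b y < d \<Longrightarrow> P \<subseteq> C \<or> Q \<subseteq> C"
    using X(2) xy unfolding connected_joins_fat_def connected_joins_fat_at_def by metis
  have "min (emeasure M P) (emeasure M Q) > 0" using full_support PQ by auto
  then obtain V where V: "openin (top_of_set X) V" "connected V" "x \<in> V" "V \<subseteq> ball x d"
      and V_small: "emeasure M V < min (emeasure M P) (emeasure M Q)"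
    using small_connected_neighbourhood[OF X(1) sets_M less_imp_neq[OF fin] xy(1) _ _ \<open>d > 0\<close>]
      nonatomic xy(1) by blast
  have V_sets: "V \<in> sets M"
    using V(1) unfolding sets_M sets_restrict_space openin_open by auto
  have "emeasure M V > 0" using full_support V by auto
  from rigid_along_eventually_meets[OF R V_sets this
      homeomorphism_mpt_funpow_image(1)[OF sets_M hom mp V_sets]]
  have "eventually (\<lambda>j. V \<inter> (T ^^ n (s j)) ` V \<noteq> {}) sequentially"
    by (rule eventually_subseq[OF s])
  moreover have "eventually (\<lambda>j. z j \<in> V) sequentially"
  proof -
    obtain W where "open W" "V = X \<inter> W" using V(1) by (auto simp: openin_open)
    thus ?thesis using topological_tendstoD[OF z(2)] V(3) z(1) by auto
  qed
  moreover have "eventually (\<lambda>j. dist ((T ^^ n (s j)) (z j)) y < d) sequentially"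
    using z(3) \<open>d > 0\<close> by (rule tendstoD)
  ultimately have "eventually (\<lambda>j. False) sequentially"
  proof eventually_elim
    case (elim j)
    have "d \<le> dist ((T ^^ n (s j)) (z j)) y"
      using V_small unfolding min_less_iff_conj
      by (intro recurrent_small_connected_stays_far[OF sets_M hom mp joins V(1,2,4) _ _ elim(1,2)])
        simp_all
    thus False using elim(3) by simp
  qed
  thus False by simp
qed

lemma rigid_imp_uniformly_rigid:
  fixes X :: "'a::metric_space set"
  assumes X: "compact X" "X \<noteq> {}" "locally connected X" "connected_joins_fat X"
    and sets_M: "sets M = sets (restrict_space borel X)" and fin: "emeasure M X < \<infinity>"
    and nonatomic: "\<forall>x\<in>X. emeasure M {x} = 0"
    and full_support: "\<forall>U. openin (top_of_set X) U \<and> U \<noteq> {} \<longrightarrow> emeasure M U > 0"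
    and hom: "homeomorphism X X T S" and mp: "mpt M T" and R: "rigid_along M T n"
  shows "uniformly_rigid_along X T n"
proof -
  have maps: "(T ^^ m) x \<in> X" if "x \<in> X" for m x
    using homeomorphism_funpow[OF hom, of m] that by (auto simp: homeomorphism_def)
  have "eventually (\<lambda>k. \<forall>x\<in>X. dist ((T ^^ n k) x) x < e) sequentially" if "e > 0" for e
  proof (rule ccontr)
    assume "\<not> ?thesis"
    then obtain x y s z where xy: "x \<in> X" "y \<in> X" "e \<le> dist y x" and s: "strict_mono s"
        and z: "\<And>j. z j \<in> X" "z \<longlonglongrightarrow> x" "(\<lambda>j. (T ^^ n (s j)) (z j)) \<longlonglongrightarrow> y"
      using compact_not_eventually_close_limit_pair[where f = "\<lambda>k. T ^^ n k", OF X(1) maps]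
      by blast
    have "y = x"
      by (rule rigid_along_limit_pair_eq[OF X(3,4) sets_M fin nonatomic full_support hom mp R
            xy(1,2) s z])
    thus False using xy(3) \<open>e > 0\<close> by simp
  qed
  thus ?thesis
    using uniformly_rigid_along_iff[OF compact_imp_bounded[OF X(1)] X(2)] hom
    by (simp add: homeomorphism_def)
qed

section \<open>Arcs and circles\<close>

lemma connected_real_contains_between:
  fixes C :: "complex set"
  assumes "connected C" "C \<subseteq> \<real>" "a \<in> C" "b \<in> C" "Re a \<le> t" "t \<le> Re b"
  shows "complex_of_real t \<in> C"
proof -
  have "connected (Re ` C)"
    by (rule connected_continuous_image[OF _ assms(1)]) (intro continuous_intros)
  hence "{Re a..Re b} \<subseteq> Re ` C"
    by (rule connected_contains_Icc) (use assms(3,4) in auto)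
  hence "t \<in> Re ` C" using assms(5,6) by auto
  then obtain c where "c \<in> C" "Re c = t" by auto
  moreover have "c = complex_of_real (Re c)" using \<open>c \<in> C\<close> assms(2) by (auto elim: Reals_cases)
  ultimately show ?thesis by simp
qed

lemma connected_joins_fat_at_interval:
  assumes u: "u \<in> complex_of_real ` {0..1}" and v: "v \<in> complex_of_real ` {0..1}"
    and uv: "Re u < Re v"
  shows "connected_joins_fat_at (complex_of_real ` {0..1}) u v"
proof -
  define I where "I = complex_of_real ` {0..1}"
  define d where "d = (Re v - Re u) / 3"
  define P where "P = I \<inter> {z. Re u + d < Re z \<and> Re z < Re v - d}"
  have "d > 0" using uv d_def by simp
  moreover have "openin (top_of_set I) P"
    unfolding P_def Collect_conj_eq
    by (intro openin_open_Int open_Int open_halfspace_Re_gt open_halfspace_Re_lt)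
  moreover have "P \<noteq> {}"
  proof -
    define m where "m = (Re u + Re v) / 2"
    have "m \<in> {0..1}" using u v unfolding m_def by auto
    hence "complex_of_real m \<in> I" unfolding I_def by (rule imageI)
    moreover have "Re u + d < m" "m < Re v - d" using uv d_def m_def by auto
    ultimately have "complex_of_real m \<in> P" unfolding P_def by simp
    thus ?thesis by auto
  qed
  moreover have "\<forall>C a b. connected C \<longrightarrow> C \<subseteq> I \<longrightarrow> a \<in> C \<longrightarrow> b \<in> C \<longrightarrow>
      dist a u < d \<longrightarrow> dist b v < d \<longrightarrow> P \<subseteq> C \<or> P \<subseteq> C"
  proof (intro allI impI disjI1 subsetI)
    fix C a b
    assume C: "connected C" "C \<subseteq> I" "a \<in> C" "b \<in> C" and near: "dist a u < d" "dist b v < d"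
    have ab: "Re a < Re u + d" "Re v - d < Re b"
      using near abs_Re_le_cmod[of "a - u"] abs_Re_le_cmod[of "b - v"] by (auto simp: dist_norm)
    have CR: "C \<subseteq> \<real>" using C(2) unfolding I_def by auto
    fix z assume "z \<in> P"
    hence z: "z = complex_of_real (Re z)" "Re u + d < Re z" "Re z < Re v - d"
      unfolding P_def I_def by auto
    have "complex_of_real (Re z) \<in> C"
      by (rule connected_real_contains_between[OF C(1) CR C(3,4)]) (use ab z in linarith)+
    thus "z \<in> C" using z(1) by metis
  qed
  ultimately show ?thesis
    unfolding connected_joins_fat_at_def I_def[symmetric]
    by (intro exI[of _ d] exI[of _ P] exI[of _ P] conjI) simp_all
qed

lemma connected_joins_fat_interval: "connected_joins_fat (complex_of_real ` {0..1})"
  unfolding connected_joins_fat_def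
proof (intro ballI impI)
  fix x y assume "x \<in> complex_of_real ` {0..1}" "y \<in> complex_of_real ` {0..1}" "x \<noteq> y"
  moreover from this have "Re x < Re y \<or> Re y < Re x" by auto
  ultimately show "connected_joins_fat_at (complex_of_real ` {0..1}) x y"
    by (auto intro: connected_joins_fat_at_interval connected_joins_fat_at_commute)
qed

text \<open>Its sign tells on which side of the line through \<open>p\<close> and \<open>q\<close> the point \<open>z\<close> lies.\<close>

definition chord_side :: "complex \<Rightarrow> complex \<Rightarrow> complex \<Rightarrow> real" where
  "chord_side p q z = Im ((z - p) * cnj (q - p))"

lemma unit_circle_chord_side_eq_0:
  fixes z p q :: complex
  assumes "cmod z = 1" "cmod p = 1" "cmod q = 1" "p \<noteq> q" and "chord_side p q z = 0"
  shows "z = p \<or> z = q"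
proof -
  define v where "v = q - p"
  have v0: "v \<noteq> 0" using assms(4) v_def by auto
  define s where "s = Re ((z - p) * cnj v) / (cmod v)\<^sup>2"
  have real: "(z - p) * cnj v = of_real (Re ((z - p) * cnj v))"
    using assms(5) v_def by (simp add: chord_side_def complex_eq_iff)
  have zs: "z - p = of_real s * v"
  proof -
    have "(z - p) * of_real ((cmod v)\<^sup>2) = of_real (Re ((z - p) * cnj v)) * v"
      using real by (metis complex_norm_square mult.assoc mult.commute of_real_power)
    thus ?thesis using v0 unfolding s_def by (simp add: field_simps)
  qed
  have norm2: "(cmod w)\<^sup>2 = (Re w)\<^sup>2 + (Im w)\<^sup>2" for w :: complex
    by (simp add: cmod_def)
  have hp: "(Re p)\<^sup>2 + (Im p)\<^sup>2 = 1" using assms(2) norm2[of p] by simp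
  have hq: "(Re p + Re v)\<^sup>2 + (Im p + Im v)\<^sup>2 = 1" using assms(3) norm2[of q] v_def by simp
  have hz: "(Re p + s * Re v)\<^sup>2 + (Im p + s * Im v)\<^sup>2 = 1"
    using assms(1) zs norm2[of z] by (simp add: algebra_simps)
  have vpos: "(Re v)\<^sup>2 + (Im v)\<^sup>2 > 0"
    using v0 by (simp add: complex_eq_iff sum_power2_gt_zero_iff)
  have pv: "2 * (Re p * Re v + Im p * Im v) = - ((Re v)\<^sup>2 + (Im v)\<^sup>2)"
    using hp hq by (simp add: power2_eq_square algebra_simps)
  have "s\<^sup>2 * ((Re v)\<^sup>2 + (Im v)\<^sup>2) + s * (2 * (Re p * Re v + Im p * Im v)) = 0"
    using hp hz by (simp add: power2_eq_square algebra_simps)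
  hence "s * (s - 1) * ((Re v)\<^sup>2 + (Im v)\<^sup>2) = 0"
    unfolding pv by (simp add: power2_eq_square algebra_simps)
  hence "s = 0 \<or> s = 1" using vpos by auto
  thus ?thesis using zs v_def by auto
qed

lemma chord_side_diameter:
  fixes x y :: complex
  assumes "cmod x = 1" "cmod y = 1" "x \<noteq> y"
  defines "w \<equiv> \<i> * ((y - x) / of_real (cmod (y - x)))"
  shows "cmod w = 1" "chord_side w (- w) x = - cmod (y - x)" "chord_side w (- w) y = cmod (y - x)"
proof -
  define D where "D = cmod (y - x)"
  have D0: "D > 0" using assms(3) D_def by auto
  have norm2: "(cmod w)\<^sup>2 = (Re w)\<^sup>2 + (Im w)\<^sup>2" for w :: complex
    by (simp add: cmod_def)
  have hx: "(Re x)\<^sup>2 + (Im x)\<^sup>2 = 1" using assms(1) norm2[of x] by simp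
  have hy: "(Re y)\<^sup>2 + (Im y)\<^sup>2 = 1" using assms(2) norm2[of y] by simp
  have hD: "D\<^sup>2 = (Re y - Re x)\<^sup>2 + (Im y - Im x)\<^sup>2" using norm2[of "y - x"] D_def by simp
  show "cmod w = 1" using D0 unfolding w_def D_def by (simp add: norm_mult norm_divide)
  have "chord_side w (- w) x = 2 * (Re x * (Re y - Re x) + Im x * (Im y - Im x)) / D"
    unfolding chord_side_def w_def D_def[symmetric] using D0
    by (simp add: field_simps power2_eq_square)
  also have "\<dots> = - D" using hx hy hD D0 by (simp add: field_simps power2_eq_square)
  finally show "chord_side w (- w) x = - cmod (y - x)" unfolding D_def .
  have "chord_side w (- w) y = 2 * (Re y * (Re y - Re x) + Im y * (Im y - Im x)) / D"
    unfolding chord_side_def w_def D_def[symmetric] using D0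
    by (simp add: field_simps power2_eq_square)
  also have "\<dots> = D" using hx hy hD D0 by (simp add: field_simps power2_eq_square)
  finally show "chord_side w (- w) y = cmod (y - x)" unfolding D_def .
qed

lemma chord_side_perturbation:
  fixes a x p q w :: complex
  assumes "cmod p = 1" "cmod q = 1" "cmod x = 1" "cmod w = 1"
    and "dist a x < d" "dist p w < d" "dist q (- w) < d"
  shows "\<bar>chord_side p q a - chord_side w (- w) x\<bar> \<le> 8 * d"
proof -
  have d0: "0 \<le> d" using assms(5) by (meson less_le_not_le order.trans zero_le_dist)
  have n1: "cmod ((a - x) - (p - w)) \<le> 2 * d"
    using assms(5,6) norm_triangle_ineq4[of "a - x" "p - w"] by (simp add: dist_norm)
  have n2: "cmod (q - p) \<le> 2" using norm_triangle_ineq4[of q p] assms(1,2) by simp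
  have n3: "cmod (x - w) \<le> 2" using norm_triangle_ineq4[of x w] assms(3,4) by simp
  have n4: "cmod ((q + w) - (p - w)) \<le> 2 * d"
    using assms(6,7) norm_triangle_ineq4[of "q + w" "p - w"] by (simp add: dist_norm)
  have "\<bar>chord_side p q a - chord_side w (- w) x\<bar>
      \<le> cmod ((a - p) * cnj (q - p) - (x - w) * cnj (- w - w))"
    unfolding chord_side_def by (metis abs_Im_le_cmod minus_complex.sel(2))
  also have "(a - p) * cnj (q - p) - (x - w) * cnj (- w - w) =
      ((a - x) - (p - w)) * cnj (q - p) + (x - w) * cnj ((q + w) - (p - w))"
    by (simp add: algebra_simps)
  also have "cmod \<dots> \<le> cmod ((a - x) - (p - w)) * cmod (q - p)
      + cmod (x - w) * cmod ((q + w) - (p - w))"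
    by (metis complex_mod_cnj norm_mult norm_triangle_ineq)
  also have "\<dots> \<le> 2 * d * 2 + 2 * (2 * d)"
    using d0 by (intro add_mono mult_mono n1 n2 n3 n4) auto
  finally show ?thesis by simp
qed

lemma connected_unit_circle_meets_chord_ends:
  assumes C: "connected C" "C \<subseteq> sphere 0 1" and pq: "cmod p = 1" "cmod q = 1" "p \<noteq> q"
    and ab: "a \<in> C" "b \<in> C" "chord_side p q a < 0" "chord_side p q b > 0"
  shows "p \<in> C \<or> q \<in> C"
proof -
  have "connected (chord_side p q ` C)"
    by (rule connected_continuous_image[OF _ C(1)])
      (auto simp: chord_side_def intro!: continuous_intros)
  hence "{chord_side p q a..chord_side p q b} \<subseteq> chord_side p q ` C"
    by (rule connected_contains_Icc) (use ab in auto)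
  hence "0 \<in> chord_side p q ` C" using ab(3,4) by auto
  then obtain z where "z \<in> C" "chord_side p q z = 0" by auto
  thus ?thesis using unit_circle_chord_side_eq_0[OF _ pq] C(2) by fastforce
qed

lemma connected_joins_fat_sphere: "connected_joins_fat (sphere (0::complex) 1)"
  unfolding connected_joins_fat_def
proof (intro ballI impI)
  fix x y :: complex
  assume "x \<in> sphere 0 1" "y \<in> sphere 0 1" and xy: "x \<noteq> y"
  hence x1: "cmod x = 1" and y1: "cmod y = 1" by auto
  \<comment> \<open>\<open>w\<close> and \<open>-w\<close> end the diameter perpendicular to the chord \<open>xy\<close>, so the line through
    any two points near them still separates \<open>x\<close> from \<open>y\<close>.\<close>
  define D where "D = cmod (y - x)"
  define w where "w = \<i> * ((y - x) / of_real D)"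
  note w = chord_side_diameter[OF x1 y1 xy, folded D_def, folded w_def]
  have D0: "D > 0" using xy D_def by auto
  have D2: "D \<le> 2" using norm_triangle_ineq4[of y x] x1 y1 D_def by simp
  define d where "d = D / 16"
  define P where "P = sphere 0 1 \<inter> ball w d"
  define Q where "Q = sphere 0 1 \<inter> ball (- w) d"
  have "d > 0" using D0 d_def by simp
  moreover have "openin (top_of_set (sphere 0 1)) P" "openin (top_of_set (sphere 0 1)) Q"
    unfolding P_def Q_def by (simp_all add: openin_open_Int)
  moreover have "w \<in> P" "- w \<in> Q" using w(1) \<open>d > 0\<close> unfolding P_def Q_def by auto
  moreover have "P \<subseteq> C \<or> Q \<subseteq> C"
    if C: "connected C" "C \<subseteq> sphere 0 1" "a \<in> C" "b \<in> C"
      and ax: "dist a x < d" and yb: "dist b y < d" for C a b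
  proof (rule ccontr)
    assume "\<not> (P \<subseteq> C \<or> Q \<subseteq> C)"
    then obtain p q where p: "p \<in> P" "p \<notin> C" and q: "q \<in> Q" "q \<notin> C" by auto
    have p1: "cmod p = 1" and q1: "cmod q = 1" using p q P_def Q_def by auto
    have pw: "dist p w < d" and qw: "dist q (- w) < d"
      using p q P_def Q_def by (auto simp: dist_commute)
    have "p \<noteq> q"
    proof
      assume "p = q"
      hence "dist w (- w) < 2 * d" using pw qw dist_triangle[of w "- w" p]
        by (simp add: dist_commute)
      moreover have "dist w (- w) = 2" using w(1) by (simp add: dist_norm)
      ultimately show False using D2 d_def by simp
    qed
    have "chord_side p q a < 0"
      using chord_side_perturbation[OF p1 q1 x1 w(1) ax pw qw] w(2) d_def D0 by linarith
    moreover have "chord_side p q b > 0"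
      using chord_side_perturbation[OF p1 q1 y1 w(1) yb pw qw] w(3) d_def D0 by linarith
    ultimately show False
      using connected_unit_circle_meets_chord_ends[OF C(1,2) p1 q1 \<open>p \<noteq> q\<close> C(3,4)] p(2) q(2)
      by blast
  qed
  ultimately show "connected_joins_fat_at (sphere 0 1) x y"
    unfolding connected_joins_fat_at_def
    by (intro exI[of _ d] exI[of _ P] exI[of _ Q] conjI allI impI) auto
qed

theorem lemma3p1:
  fixes X :: "complex set" and M :: "complex measure" and T :: "complex \<Rightarrow> complex"
    and n :: "nat \<Rightarrow> nat"
  assumes X: "X = complex_of_real ` {0..1} \<or> X = sphere 0 1"
    and sets_M: "sets M = sets (restrict_space borel X)"
    and finite: "emeasure M X < \<infinity>"
    and nonatomic: "\<forall>x\<in>X. emeasure M {x} = 0"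
    and full_support: "\<forall>U. openin (top_of_set X) U \<and> U \<noteq> {} \<longrightarrow> emeasure M U > 0"
    and homeo: "\<exists>S. homeomorphism X X T S"
    and mp: "mpt M T"
    and n: "filterlim n at_top sequentially"
  shows "rigid_along M T n \<longleftrightarrow> uniformly_rigid_along X T n"
proof -
  obtain S where hom: "homeomorphism X X T S" using homeo by blast
  have interval: "compact (complex_of_real ` {0..1})" "locally connected (complex_of_real ` {0..1})"
    using convex_imp_locally_connected
      [OF convex_linear_image[OF linear_of_real convex_real_interval(5)]]
    by (auto intro: compact_continuous_image continuous_intros)
  have "compact X" "X \<noteq> {}" "locally connected X" "connected_joins_fat X"
    using X interval locally_connected_sphere
      connected_joins_fat_interval connected_joins_fat_sphere
    by (elim disjE; force)+
  thus ?thesis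
    using rigid_imp_uniformly_rigid[OF _ _ _ _ sets_M finite nonatomic full_support hom mp]
      uniformly_rigid_imp_rigid[OF _ _ sets_M finite hom mp]
    by blast
qed

end
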